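(* Let $(\Omega,\mathcal F,\mathbb P)$ be an atomless probability space, let $X$ and $Y$ be continuously distributed integrable random variables on it, and let $p\in(0,1)$. Then: (i) If $X$ and $Y$ are weakly comonotonic with respect to $\mathcal P^X_p$, and $X$ and $Y$ are weakly antimonotonic with respect to $\mathcal Q^X_p$, then $(X,Y)$ maximizes the $\mathrm{VaR}_p$ aggregation, i.e. $\mathrm{VaR}_p(X+Y)=\max\{\mathrm{VaR}_p(X'+Y'): X'\overset{d}{=}X,\ Y'\overset{d}{=}Y\}$. (ii) $X$ and $Y$ are weakly comonotonic with respect to $\mathcal P^X_p$ if and only if $(X,Y)$ maximizes the $\mathrm{ES}_p$ aggregation, i.e. $\mathrm{ES}_p(X+Y)=\max\{\mathrm{ES}_p(X'+Y'): X'\overset{d}{=}X,\ Y'\overset{d}{=}Y\}$.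
   Context: In the maxima, $X',Y'$ range over random variables on $(\Omega,\mathcal F,\mathbb P)$ and $\overset{d}{=}$ denotes equality in distribution. For a random variable $Z$ and $q\in(0,1)$, $\mathrm{VaR}_q(Z)=\inf\{x\in\mathbb R:\mathbb P(Z\le x)>q\}$ and $\mathrm{ES}_q(Z)=\frac1{1-q}\int_q^1\mathrm{VaR}_r(Z)\,\mathrm dr$. Let $A^Z_p=\{\omega: Z(\omega)>\mathrm{VaR}_p(Z)\}$, $\mathcal P^Z_p=\{\delta_\omega\times\delta_{\omega'}:\omega\in A^Z_p,\ \omega'\in(A^Z_p)^c\}$ and $\mathcal Q^Z_p=\{\delta_\omega\times\delta_{\omega'}:\omega,\omega'\in A^Z_p\}$, where $\delta_\omega$ is the point mass at $\omega$. For a set $\mathcal P$ of product probability measures $\pi_1\times\pi_2$ on $(\Omega^2,\mathcal F\otimes\mathcal F)$, $X,Y$ are weakly comonotonic (resp. weakly antimonotonic) with respect to $\mathcal P$ if $\iint_{\Omega^2}(X(\omega)-X(\omega'))(Y(\omega)-Y(\omega'))\,\pi_1(\mathrm d\omega)\pi_2(\mathrm d\omega')\ge0$ (resp. $\le 0$) for every $\pi_1\times\pi_2\in\mathcal P$; for point masses $\delta_\omega\times\delta_{\omega'}$ the integral is $(X(\omega)-X(\omega'))(Y(\omega)-Y(\omega'))$. Random variables that are a.s. equal are identified, so such conditions are understood to hold for some representative versions of $X$ and $Y$. *)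

theory Defs
  imports "HOL-Probability.Probability"
begin

definition atomless :: "'a measure \<Rightarrow> bool" where
  "atomless M \<longleftrightarrow> (\<forall>A\<in>sets M. measure M A > 0 \<longrightarrow>
      (\<exists>B\<in>sets M. B \<subseteq> A \<and> 0 < measure M B \<and> measure M B < measure M A))"

definition continuously_distributed :: "'a measure \<Rightarrow> ('a \<Rightarrow> real) \<Rightarrow> bool" where
  "continuously_distributed M Z \<longleftrightarrow> (\<forall>x. measure M {w \<in> space M. Z w = x} = 0)"

definition VaR :: "'a measure \<Rightarrow> real \<Rightarrow> ('a \<Rightarrow> real) \<Rightarrow> real" where
  "VaR M q Z = Inf {x. measure M {w \<in> space M. Z w \<le> x} > q}"

definition ES :: "'a measure \<Rightarrow> real \<Rightarrow> ('a \<Rightarrow> real) \<Rightarrow> real" where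
  "ES M q Z = (LBINT r:{q<..<1}. VaR M r Z) / (1 - q)"

definition tail_set :: "'a measure \<Rightarrow> real \<Rightarrow> ('a \<Rightarrow> real) \<Rightarrow> 'a set" where
  "tail_set M p Z = {w \<in> space M. Z w > VaR M p Z}"

text \<open>Index pairs (w,w') of the point-mass product measures in P^Z_p and Q^Z_p.\<close>
definition P_pairs :: "'a measure \<Rightarrow> real \<Rightarrow> ('a \<Rightarrow> real) \<Rightarrow> ('a \<times> 'a) set" where
  "P_pairs M p Z = tail_set M p Z \<times> (space M - tail_set M p Z)"

definition Q_pairs :: "'a measure \<Rightarrow> real \<Rightarrow> ('a \<Rightarrow> real) \<Rightarrow> ('a \<times> 'a) set" where
  "Q_pairs M p Z = tail_set M p Z \<times> tail_set M p Z"

text \<open>Weak comonotonicity / antimonotonicity w.r.t. a set of point-mass products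
  delta_w x delta_w', (w,w') ranging over the given set of pairs.\<close>
definition wcomono_pts :: "('a \<times> 'a) set \<Rightarrow> ('a \<Rightarrow> real) \<Rightarrow> ('a \<Rightarrow> real) \<Rightarrow> bool" where
  "wcomono_pts S X Y \<longleftrightarrow> (\<forall>(w, w')\<in>S. (X w - X w') * (Y w - Y w') \<ge> 0)"

definition wantimono_pts :: "('a \<times> 'a) set \<Rightarrow> ('a \<Rightarrow> real) \<Rightarrow> ('a \<Rightarrow> real) \<Rightarrow> bool" where
  "wantimono_pts S X Y \<longleftrightarrow> (\<forall>(w, w')\<in>S. (X w - X w') * (Y w - Y w') \<le> 0)"

definition for_some_versions ::
  "'a measure \<Rightarrow> (('a \<Rightarrow> real) \<Rightarrow> ('a \<Rightarrow> real) \<Rightarrow> bool) \<Rightarrow> ('a \<Rightarrow> real) \<Rightarrow> ('a \<Rightarrow> real) \<Rightarrow> bool" where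
  "for_some_versions M R X Y \<longleftrightarrow> (\<exists>X0 Y0. X0 \<in> borel_measurable M \<and> Y0 \<in> borel_measurable M \<and>
      (AE w in M. X0 w = X w) \<and> (AE w in M. Y0 w = Y w) \<and> R X0 Y0)"

definition weakly_comonotonic_P :: "'a measure \<Rightarrow> real \<Rightarrow> ('a \<Rightarrow> real) \<Rightarrow> ('a \<Rightarrow> real) \<Rightarrow> bool" where
  "weakly_comonotonic_P M p X Y \<longleftrightarrow>
     for_some_versions M (\<lambda>X0 Y0. wcomono_pts (P_pairs M p X0) X0 Y0) X Y"

definition weakly_antimonotonic_Q :: "'a measure \<Rightarrow> real \<Rightarrow> ('a \<Rightarrow> real) \<Rightarrow> ('a \<Rightarrow> real) \<Rightarrow> bool" where
  "weakly_antimonotonic_Q M p X Y \<longleftrightarrow>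
     for_some_versions M (\<lambda>X0 Y0. wantimono_pts (Q_pairs M p X0) X0 Y0) X Y"

end

(* Write A for the tail event {X > VaR_p X}, which has probability 1 - p because X is continuous.
   By the Rockafellar-Uryasev formula (1 - p) ES_p Z = min_t ((1 - p) t + E (Z - t)^+), ES_p is
   subadditive, and ES_p X + ES_p Y = ES_p (X + Y) as soon as Y, too, is >= c on A and <= c off A
   for some c: then both tail integrals, and that of X + Y, are integrals over the same event A.
   This separation is exactly weak comonotonicity w.r.t. P^X_p; the comonotone coupling
   F_Y^-1 (F_X X) separates, so ES_p X + ES_p Y is the maximal ES, and an ES-maximiser has
   E ((X - a)^+ + (Y - b)^+ - (X + Y - a - b)^+) = 0, which forces the separation, giving (ii).
   For (i), pick w1, w2 in A with X w1 < X w2, P(X w1 < X <= X w2) > 0 and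
   X w2 + Y w1 close to VaR_p (X + Y). Comonotonicity across the boundary of A and
   antimonotonicity inside A make {X > X w2}, {Y > Y w1} and {X w1 < X <= X w2} disjoint subsets
   of A, so P(X > X w2) + P(Y > Y w1) < 1 - p, and this bounds VaR_p (X' + Y') by X w2 + Y w1 for
   every coupling. *)

theory Submission
  imports Defs
begin

section \<open>Quantile functions\<close>

definition quantile :: "real measure \<Rightarrow> real \<Rightarrow> real" where
  "quantile N r = Inf {x. r < cdf N x}"

context real_distribution
begin

lemma quantile_set_nonempty: "r < 1 \<Longrightarrow> {x. r < cdf M x} \<noteq> {}"
  using order_tendstoD(1)[OF cdf_lim_at_top_prob]
  by (metis (mono_tags) eventually_happens' mem_Collect_eq trivial_limit_at_top_linorder empty_iff)

lemma quantile_set_bdd_below: "0 < r \<Longrightarrow> bdd_below {x. r < cdf M x}"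
proof -
  assume "0 < r"
  then obtain x0 where "\<And>x. x \<le> x0 \<Longrightarrow> cdf M x < r"
    using order_tendstoD(2)[OF cdf_lim_at_bot] by (auto simp: eventually_at_bot_linorder)
  then show ?thesis by (metis (mono_tags) bdd_belowI linorder_not_le mem_Collect_eq order.asym)
qed

lemma quantile_le: "0 < r \<Longrightarrow> r < cdf M x \<Longrightarrow> quantile M r \<le> x"
  unfolding quantile_def using quantile_set_bdd_below by (intro cInf_lower) auto

lemma less_cdf_if_quantile_less:
  assumes "0 < r" "r < 1" "quantile M r < x" shows "r < cdf M x"
proof -
  obtain y where "r < cdf M y" "y < x"
    using assms quantile_set_nonempty quantile_set_bdd_below unfolding quantile_def
    by (auto simp: cInf_less_iff)
  then show ?thesis using cdf_nondecreasing[of y x] by simp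
qed

lemma le_cdf_if_quantile_le:
  assumes "0 < r" "r < 1" "quantile M r \<le> x" shows "r \<le> cdf M x"
proof (rule tendsto_lowerbound)
  show "(cdf M \<longlongrightarrow> cdf M x) (at_right x)"
    using cdf_is_right_cont by (simp add: continuous_within)
  show "\<forall>\<^sub>F y in at_right x. r \<le> cdf M y"
    using assms less_cdf_if_quantile_less[OF assms(1,2)]
    by (auto simp: eventually_at_right_field intro!: exI[of _ "x + 1"] less_imp_le)
qed simp

lemma cdf_le_if_less_quantile: "0 < r \<Longrightarrow> x < quantile M r \<Longrightarrow> cdf M x \<le> r"
  using quantile_le[of r x] by force

lemma quantile_mono: "0 < r \<Longrightarrow> r \<le> s \<Longrightarrow> s < 1 \<Longrightarrow> quantile M r \<le> quantile M s"
  unfolding quantile_def using quantile_set_nonempty[of s] quantile_set_bdd_below[of r]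
  by (intro cInf_superset_mono) auto

lemma cdf_quantile:
  assumes "0 < r" "r < 1" "measure M {quantile M r} = 0"
  shows "cdf M (quantile M r) = r"
proof (rule antisym)
  have "(cdf M \<longlongrightarrow> cdf M (quantile M r)) (at_left (quantile M r))"
    using assms(3) isCont_cdf filterlim_at_split isCont_def by blast
  then show "cdf M (quantile M r) \<le> r"
    by (rule tendsto_upperbound)
       (auto simp: eventually_at_left_field assms(1) cdf_le_if_less_quantile
             intro!: exI[of _ "quantile M r - 1"])
qed (use le_cdf_if_quantile_le assms in auto)

lemma cdf_le_iff_le_quantile:
  assumes "\<And>x. measure M {x} = 0" "0 < r" "r < 1"
  shows "cdf M x \<le> r \<longleftrightarrow> x \<le> quantile M r"
  using cdf_quantile[OF assms(2,3) assms(1)] less_cdf_if_quantile_less[OF assms(2,3), of x]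
    cdf_nondecreasing[of x "quantile M r"] by force

end

section \<open>The quantile and probability integral transforms\<close>

abbreviation uniform01 :: "real measure" where
  "uniform01 \<equiv> uniform_measure lborel {0<..<1}"

lemma uniform01_eq_density: "uniform01 = density lborel (\<lambda>x. ennreal (indicator {0<..<1} x))"
  unfolding uniform_measure_def
  by (auto simp: divide_ennreal_def intro!: arg_cong[where f="density lborel"] split: split_indicator)

lemma real_distribution_uniform01: "real_distribution uniform01"
  by (auto simp: real_distribution_def real_distribution_axioms_def intro!: prob_space_uniform_measure)

lemma AE_uniform01: "AE r in uniform01. 0 < r \<and> r < 1"
  by (rule AE_uniform_measureI) auto

lemma cdf_uniform01: "cdf uniform01 u = max 0 (min 1 u)"
proof -
  consider "u \<le> 0" | "0 < u" "u < 1" | "1 \<le> u" by linarith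
  then have "measure lborel ({0<..<1} \<inter> {..u}) = max 0 (min 1 u)"
  proof cases
    case 1 then have "{0<..<1} \<inter> {..u} = {}" by auto
    then show ?thesis using 1 by simp
  next
    case 2 then have "{0<..<1} \<inter> {..u} = {0<..u}" by auto
    then show ?thesis using 2 by simp
  next
    case 3 then have "{0<..<1} \<inter> {..u} = {0<..<1::real}" by auto
    then show ?thesis using 3 by simp
  qed
  then show ?thesis by (simp add: cdf_def)
qed

lemma measure_uniform01_singleton: "measure uniform01 {c} = 0"
  by (simp add: Int_insert_right)

text \<open>Outside \<open>(0, 1)\<close> the quantile is the infimum of \<open>UNIV\<close> or of \<open>{}\<close>; the transform
  replaces these junk values by \<open>0\<close> to be Borel measurable on all of \<open>\<real>\<close>.\<close>
definition quantile_transform :: "real measure \<Rightarrow> real \<Rightarrow> real" where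
  "quantile_transform N r = (if r \<in> {0<..<1} then quantile N r else 0)"

context real_distribution
begin

lemma borel_measurable_quantile_transform[measurable]:
  "quantile_transform M \<in> borel_measurable borel"
proof -
  have "mono_on {0<..<1} (quantile M)"
    by (auto intro!: mono_onI quantile_mono)
  then have "quantile M \<in> borel_measurable (restrict_space borel {0<..<1})"
    by (rule borel_measurable_mono_on_fnc)
  then show ?thesis
    unfolding quantile_transform_def[abs_def] by (subst (asm) measurable_restrict_space_iff) auto
qed

lemma distr_quantile_transform: "distr uniform01 borel (quantile_transform M) = M"
proof (rule cdf_unique)
  interpret U: real_distribution uniform01 by (rule real_distribution_uniform01)
  show "real_distribution (distr uniform01 borel (quantile_transform M))"
    by (intro U.real_distribution_distr) simp
  show "cdf (distr uniform01 borel (quantile_transform M)) = cdf M"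
  proof
    fix x
    let ?S = "{0<..<1} \<inter> quantile_transform M -` {..x}"
    have sub: "{0<..<cdf M x} \<subseteq> ?S" "?S \<subseteq> {0<..cdf M x}"
      using quantile_le le_cdf_if_quantile_le cdf_bounded_prob[of x]
      by (auto simp: quantile_transform_def)
    have "?S \<in> fmeasurable lborel"
      by (rule fmeasurableI2[of "{0<..<1}"]) (auto intro: fmeasurableI)
    then have "measure lborel {0<..<cdf M x} \<le> measure lborel ?S"
      by (intro measure_mono_fmeasurable[OF sub(1)]) auto
    moreover have "measure lborel ?S \<le> measure lborel {0<..cdf M x}"
      using cdf_nonneg[of x] by (intro measure_mono_fmeasurable[OF sub(2)]) (auto intro: fmeasurableI)
    ultimately have "measure lborel ?S = cdf M x"
      using cdf_nonneg[of x] by simp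
    then show "cdf (distr uniform01 borel (quantile_transform M)) x = cdf M x"
      by (simp add: cdf_def measure_distr vimage_def)
  qed
qed (rule real_distribution_axioms)

lemma borel_measurable_cdf[measurable]: "cdf M \<in> borel_measurable borel"
  by (intro borel_measurable_mono monoI cdf_nondecreasing)

lemma measure_cdf_le:
  assumes cont: "\<And>x. measure M {x} = 0"
  shows "measure M {x. cdf M x \<le> u} = max 0 (min 1 u)"
proof -
  have mid: "measure M {x. cdf M x \<le> r} = r" if "0 < r" "r < 1" for r
    using cdf_le_iff_le_quantile[OF cont that] cdf_quantile[OF that cont] by (simp add: cdf_def atMost_def)
  consider "u \<le> 0" | "0 < u" "u < 1" | "1 \<le> u" by linarith
  then show ?thesis
  proof cases
    case 1
    have "measure M {x. cdf M x \<le> u} \<le> 0 + e" if "0 < e" for e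
    proof -
      have "measure M {x. cdf M x \<le> u} \<le> measure M {x. cdf M x \<le> min e (1/2)}"
        using 1 that by (intro finite_measure_mono) auto
      then show ?thesis using mid[of "min e (1/2)"] that by simp
    qed
    then have "measure M {x. cdf M x \<le> u} \<le> 0" by (rule field_le_epsilon)
    then show ?thesis using 1 measure_nonneg[of M "{x. cdf M x \<le> u}"] by simp
  next
    case 2 then show ?thesis using mid by simp
  next
    case 3
    then have "{x. cdf M x \<le> u} = space M" using cdf_bounded_prob order_trans by auto
    then show ?thesis using 3 prob_space by simp
  qed
qed

lemma distr_cdf:
  assumes "\<And>x. measure M {x} = 0"
  shows "distr M borel (cdf M) = uniform01"
proof (rule cdf_unique)
  show "real_distribution (distr M borel (cdf M))" by simp
  show "cdf (distr M borel (cdf M)) = cdf uniform01"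
    using measure_cdf_le[OF assms]
    by (simp add: fun_eq_iff cdf_def[of "distr M borel (cdf M)"] measure_distr vimage_def
        atMost_def cdf_uniform01)
qed (rule real_distribution_uniform01)

lemma
  fixes g :: "real \<Rightarrow> real"
  assumes "integrable M g"
  shows set_integrable_comp_quantile: "set_integrable lborel {0<..<1} (\<lambda>r. g (quantile M r))"
    and integral_eq_set_integral_quantile: "(\<integral>x. g x \<partial>M) = (LBINT r:{0<..<1}. g (quantile M r))"
proof -
  have [measurable]: "g \<in> borel_measurable borel"
    using borel_measurable_integrable[OF assms] by (simp cong: measurable_cong_sets)
  have ind: "indicator {0<..<1} r *\<^sub>R g (quantile M r) = indicator {0<..<1} r * g (quantile_transform M r)"
    for r :: real
    by (simp add: quantile_transform_def indicator_def)
  have "integrable uniform01 (\<lambda>r. g (quantile_transform M r))"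
    using assms by (subst (asm) distr_quantile_transform[symmetric]) (simp add: integrable_distr_eq)
  then show "set_integrable lborel {0<..<1} (\<lambda>r. g (quantile M r))"
    unfolding set_integrable_def ind uniform01_eq_density
    by (subst (asm) integrable_density) auto
  have "(\<integral>x. g x \<partial>M) = (\<integral>r. g (quantile_transform M r) \<partial>uniform01)"
    by (subst distr_quantile_transform[symmetric]) (simp add: integral_distr)
  also have "\<dots> = (LBINT r:{0<..<1}. g (quantile M r))"
    unfolding set_lebesgue_integral_def ind uniform01_eq_density by (subst integral_density) auto
  finally show "(\<integral>x. g x \<partial>M) = (LBINT r:{0<..<1}. g (quantile M r))" .
qed

end

section \<open>Expected shortfall\<close>

lemma (in finite_measure) integrable_excess:
  "integrable M (Z :: 'a \<Rightarrow> real) \<Longrightarrow> integrable M (\<lambda>w. max (Z w - t) 0)"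
  by (intro integrable_max Bochner_Integration.integrable_diff) auto

context real_distribution
begin

text \<open>Rockafellar--Uryasev: \<open>\<integral>\<^sub>p\<^sup>1 q\<close> is the minimum over \<open>t\<close> of \<open>(1 - p) t + E (x - t)\<^sup>+\<close>,
  attained at the \<open>p\<close>-quantile.\<close>

lemma
  assumes "integrable M (\<lambda>x. x)" "0 < p" "p < 1"
  shows set_integrable_quantile: "set_integrable lborel {p<..<1} (quantile M)"
    and tail_integral_quantile:
      "(LBINT r:{p<..<1}. quantile M r) = (1 - p) * quantile M p + (\<integral>x. max (x - quantile M p) 0 \<partial>M)"
proof -
  let ?q = "quantile M p"
  note excess = set_integrable_comp_quantile[OF integrable_excess[OF assms(1)]]
    integral_eq_set_integral_quantile[OF integrable_excess[OF assms(1)]]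
  have const: "set_integrable lborel {p<..<1} (\<lambda>_. ?q)"
    using assms(2,3) by (simp add: set_integrable_def)
  have split: "indicator {p<..<1} r *\<^sub>R quantile M r
      = indicator {p<..<1} r *\<^sub>R ?q + indicator {0<..<1} r *\<^sub>R max (quantile M r - ?q) 0" for r
  proof (cases "r \<in> {0<..<1}")
    case True
    then show ?thesis
      using quantile_mono[of p r] quantile_mono[of r p] assms(2,3) by (cases "p < r") auto
  qed (use assms(2) in auto)
  show "set_integrable lborel {p<..<1} (quantile M)"
    using const excess(1) unfolding set_integrable_def split by (rule Bochner_Integration.integrable_add)
  show "(LBINT r:{p<..<1}. quantile M r) = (1 - p) * ?q + (\<integral>x. max (x - ?q) 0 \<partial>M)"
    using const excess assms(2,3) unfolding set_integrable_def set_lebesgue_integral_def split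
    by (subst Bochner_Integration.integral_add) auto
qed

lemma tail_integral_quantile_le:
  assumes "integrable M (\<lambda>x. x)" "0 < p" "p < 1"
  shows "(LBINT r:{p<..<1}. quantile M r) \<le> (1 - p) * t + (\<integral>x. max (x - t) 0 \<partial>M)"
proof -
  note excess = set_integrable_comp_quantile[OF integrable_excess[OF assms(1)]]
    integral_eq_set_integral_quantile[OF integrable_excess[OF assms(1)]]
  have const: "set_integrable lborel {p<..<1} (\<lambda>_. t)"
    using assms(2,3) by (simp add: set_integrable_def)
  have "(LBINT r:{p<..<1}. quantile M r)
      \<le> (LINT r|lborel. indicator {p<..<1} r *\<^sub>R t + indicator {0<..<1} r *\<^sub>R max (quantile M r - t) 0)"
    unfolding set_lebesgue_integral_def
  proof (rule integral_mono)
    fix r :: real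
    show "indicator {p<..<1} r *\<^sub>R quantile M r
      \<le> indicator {p<..<1} r *\<^sub>R t + indicator {0<..<1} r *\<^sub>R max (quantile M r - t) 0"
      using assms(2) by (auto simp: indicator_def)
  qed (use set_integrable_quantile[OF assms] const excess(1) in \<open>auto simp: set_integrable_def\<close>)
  also have "\<dots> = (1 - p) * t + (\<integral>x. max (x - t) 0 \<partial>M)"
    using const excess assms(2,3) unfolding set_integrable_def set_lebesgue_integral_def
    by (subst Bochner_Integration.integral_add) auto
  finally show ?thesis .
qed

end

lemma set_integrable_if_integrable:
  fixes f :: "'a \<Rightarrow> 'b::{banach, second_countable_topology}"
  shows "B \<in> sets M \<Longrightarrow> integrable M f \<Longrightarrow> set_integrable M B f"
  unfolding set_integrable_def by (rule integrable_mult_indicator)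

definition upper_event :: "'a measure \<Rightarrow> ('a \<Rightarrow> real) \<Rightarrow> real \<Rightarrow> 'a set \<Rightarrow> bool" where
  "upper_event M Z c B \<longleftrightarrow> (AE w in M. (w \<in> B \<longrightarrow> c \<le> Z w) \<and> (w \<notin> B \<longrightarrow> Z w \<le> c))"

context prob_space
begin

lemma cdf_distr:
  assumes [measurable]: "Z \<in> borel_measurable M"
  shows "cdf (distr M borel Z) x = prob {w \<in> space M. Z w \<le> x}"
  by (simp add: cdf_def measure_distr vimage_def Int_def conj_commute)

lemma prob_eq_measure_distr:
  assumes [measurable]: "Z \<in> borel_measurable M" "B \<in> sets borel"
  shows "prob {w \<in> space M. Z w \<in> B} = measure (distr M borel Z) B"
  by (simp add: measure_distr vimage_def Int_def conj_commute)

lemma VaR_eq_quantile: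
  "Z \<in> borel_measurable M \<Longrightarrow> VaR M r Z = quantile (distr M borel Z) r"
  by (simp add: VaR_def quantile_def cdf_distr)

lemma ES_eq_quantile:
  "Z \<in> borel_measurable M \<Longrightarrow> ES M r Z = (LBINT q:{r<..<1}. quantile (distr M borel Z) q) / (1 - r)"
  by (simp add: ES_def VaR_eq_quantile)

lemma continuously_distributed_iff_distr:
  assumes [measurable]: "Z \<in> borel_measurable M"
  shows "continuously_distributed M Z \<longleftrightarrow> (\<forall>x. measure (distr M borel Z) {x} = 0)"
  by (simp add: continuously_distributed_def measure_distr vimage_def Int_def conj_commute)

lemma integrable_iff_distr:
  "(Z :: 'a \<Rightarrow> real) \<in> borel_measurable M
    \<Longrightarrow> integrable M Z \<longleftrightarrow> integrable (distr M borel Z) (\<lambda>x. x)"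
  using integrable_distr_eq[of Z M borel "\<lambda>x. x"] by simp

lemma VaR_cong_AE:
  assumes "X \<in> borel_measurable M" "X' \<in> borel_measurable M" "AE w in M. X' w = X w"
  shows "VaR M r X' = VaR M r X"
  using assms by (simp add: VaR_eq_quantile distr_cong_AE)

lemma ES_cong_distr:
  "X \<in> borel_measurable M \<Longrightarrow> X' \<in> borel_measurable M \<Longrightarrow> distr M borel X' = distr M borel X
    \<Longrightarrow> ES M p X' = ES M p X"
  by (simp add: ES_eq_quantile)

lemma continuously_distributed_cong_distr:
  assumes "X \<in> borel_measurable M" "X' \<in> borel_measurable M" "distr M borel X' = distr M borel X"
  shows "continuously_distributed M X' \<longleftrightarrow> continuously_distributed M X"
  using assms by (simp add: continuously_distributed_iff_distr)

lemma integrable_cong_distr: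
  fixes X X' :: "'a \<Rightarrow> real"
  assumes "X \<in> borel_measurable M" "X' \<in> borel_measurable M" "distr M borel X' = distr M borel X"
  shows "integrable M X' \<longleftrightarrow> integrable M X"
  using assms by (simp add: integrable_iff_distr[OF assms(1)] integrable_iff_distr[OF assms(2)])

lemma tail_set_in_events[measurable]: "Z \<in> borel_measurable M \<Longrightarrow> tail_set M p Z \<in> events"
  unfolding tail_set_def by measurable

lemma prob_tail_set:
  assumes [measurable]: "Z \<in> borel_measurable M" and "continuously_distributed M Z" "0 < p" "p < 1"
  shows "prob (tail_set M p Z) = 1 - p"
proof -
  interpret Z: real_distribution "distr M borel Z" by simp
  have "prob {w \<in> space M. Z w \<le> VaR M p Z} = p"
    using Z.cdf_quantile assms by (simp add: continuously_distributed_iff_distr VaR_eq_quantile cdf_distr)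
  moreover have "tail_set M p Z = space M - {w \<in> space M. Z w \<le> VaR M p Z}"
    by (auto simp: tail_set_def)
  ultimately show ?thesis by (simp add: prob_compl)
qed

lemma
  assumes [measurable]: "Z \<in> borel_measurable M" and "integrable M Z" "0 < p" "p < 1"
  shows ES_eq_VaR_plus_excess:
      "(1 - p) * ES M p Z = (1 - p) * VaR M p Z + (\<integral>w. max (Z w - VaR M p Z) 0 \<partial>M)"
    and ES_le_plus_excess: "(1 - p) * ES M p Z \<le> (1 - p) * t + (\<integral>w. max (Z w - t) 0 \<partial>M)"
proof -
  interpret Z: real_distribution "distr M borel Z" by simp
  have int: "integrable (distr M borel Z) (\<lambda>x. x)"
    using assms(2) by (simp add: integrable_iff_distr)
  have excess: "(\<integral>x. max (x - s) 0 \<partial>distr M borel Z) = (\<integral>w. max (Z w - s) 0 \<partial>M)" for s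
    by (rule integral_distr) auto
  have ES: "(1 - p) * ES M p Z = (LBINT r:{p<..<1}. quantile (distr M borel Z) r)"
    using assms(4) by (simp add: ES_eq_quantile)
  show "(1 - p) * ES M p Z = (1 - p) * VaR M p Z + (\<integral>w. max (Z w - VaR M p Z) 0 \<partial>M)"
    unfolding ES VaR_eq_quantile[OF assms(1)] excess[symmetric]
    by (rule Z.tail_integral_quantile[OF int assms(3,4)])
  show "(1 - p) * ES M p Z \<le> (1 - p) * t + (\<integral>w. max (Z w - t) 0 \<partial>M)"
    unfolding ES excess[symmetric] by (rule Z.tail_integral_quantile_le[OF int assms(3,4)])
qed

lemma integral_indicator_plus_excess:
  assumes "B \<in> events" "integrable M (Z :: 'a \<Rightarrow> real)"
  shows "(\<integral>w. indicator B w * t + max (Z w - t) 0 \<partial>M) = prob B * t + (\<integral>w. max (Z w - t) 0 \<partial>M)"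
  using assms
  by (subst Bochner_Integration.integral_add) (auto intro!: integrable_excess simp: less_top[symmetric])

lemma set_integral_le_ES:
  assumes [measurable]: "Z \<in> borel_measurable M" "B \<in> events"
    and "integrable M Z" "prob B = 1 - p" "0 < p" "p < 1"
  shows "(LINT w:B|M. Z w) \<le> (1 - p) * ES M p Z"
proof -
  let ?a = "VaR M p Z"
  have "set_integrable M B Z"
    using assms by (intro set_integrable_if_integrable) auto
  then have "(LINT w:B|M. Z w) \<le> (\<integral>w. indicator B w * ?a + max (Z w - ?a) 0 \<partial>M)"
    unfolding set_lebesgue_integral_def set_integrable_def using assms(3)
    by (intro integral_mono)
       (auto intro!: integrable_excess simp: less_top[symmetric] split: split_indicator)
  also have "\<dots> = (1 - p) * ES M p Z"
    using assms integral_indicator_plus_excess ES_eq_VaR_plus_excess by simp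
  finally show ?thesis .
qed

lemma set_integral_eq_ES_if_upper_event:
  assumes [measurable]: "Z \<in> borel_measurable M" "B \<in> events"
    and "integrable M Z" "prob B = 1 - p" "0 < p" "p < 1" "upper_event M Z c B"
  shows "(LINT w:B|M. Z w) = (1 - p) * ES M p Z"
proof (rule antisym[OF set_integral_le_ES[OF assms(1-6)]])
  have "(LINT w:B|M. Z w) = (\<integral>w. indicator B w * c + max (Z w - c) 0 \<partial>M)"
    unfolding set_lebesgue_integral_def
    by (rule integral_cong_AE) (use assms(7) in \<open>auto simp: upper_event_def split: split_indicator\<close>)
  then show "(1 - p) * ES M p Z \<le> (LINT w:B|M. Z w)"
    using assms integral_indicator_plus_excess ES_le_plus_excess by simp
qed

lemma ES_add_le:
  assumes [measurable]: "X \<in> borel_measurable M" "Y \<in> borel_measurable M"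
    and "integrable M X" "integrable M Y" "0 < p" "p < 1"
  shows "ES M p (\<lambda>w. X w + Y w) \<le> ES M p X + ES M p Y"
proof -
  let ?a = "VaR M p X" and ?b = "VaR M p Y"
  have "(1 - p) * ES M p (\<lambda>w. X w + Y w) \<le> (1 - p) * (?a + ?b) + (\<integral>w. max (X w + Y w - (?a + ?b)) 0 \<partial>M)"
    using assms by (intro ES_le_plus_excess) auto
  also have "\<dots> \<le> (1 - p) * (?a + ?b) + (\<integral>w. max (X w - ?a) 0 + max (Y w - ?b) 0 \<partial>M)"
    using assms(3,4)
    by (intro add_left_mono integral_mono Bochner_Integration.integrable_add integrable_excess) auto
  also have "\<dots> = (1 - p) * (ES M p X + ES M p Y)"
    using assms ES_eq_VaR_plus_excess[of X p] ES_eq_VaR_plus_excess[of Y p]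
    by (subst Bochner_Integration.integral_add) (auto intro!: integrable_excess simp: algebra_simps)
  finally show ?thesis using assms(5,6) by simp
qed

lemma ES_add_le_if_same_marginals:
  assumes [measurable]: "X \<in> borel_measurable M" "Y \<in> borel_measurable M"
    "X' \<in> borel_measurable M" "Y' \<in> borel_measurable M"
    and "integrable M X" "integrable M Y" "0 < p" "p < 1"
    and "distr M borel X' = distr M borel X" "distr M borel Y' = distr M borel Y"
  shows "ES M p (\<lambda>w. X' w + Y' w) \<le> ES M p X + ES M p Y"
proof -
  have "integrable M X'" "integrable M Y'"
    using assms(5,6) integrable_cong_distr[OF assms(1,3,9)] integrable_cong_distr[OF assms(2,4,10)]
    by simp_all
  then have "ES M p (\<lambda>w. X' w + Y' w) \<le> ES M p X' + ES M p Y'"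
    using assms(7,8) by (intro ES_add_le) auto
  then show ?thesis
    using assms by (simp add: ES_cong_distr[of X X'] ES_cong_distr[of Y Y'])
qed

lemma ES_add_ge_if_common_upper_event:
  assumes [measurable]: "X \<in> borel_measurable M" "Y \<in> borel_measurable M" "B \<in> events"
    and "integrable M X" "integrable M Y" "prob B = 1 - p" "0 < p" "p < 1"
    and "upper_event M X a B" "upper_event M Y b B"
  shows "ES M p X + ES M p Y \<le> ES M p (\<lambda>w. X w + Y w)"
proof -
  have "(1 - p) * (ES M p X + ES M p Y) = (LINT w:B|M. X w) + (LINT w:B|M. Y w)"
    using assms by (simp add: distrib_left set_integral_eq_ES_if_upper_event)
  also have "\<dots> = (LINT w:B|M. X w + Y w)"
    using assms by (intro set_integral_add(2)[symmetric] set_integrable_if_integrable) auto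
  also have "\<dots> \<le> (1 - p) * ES M p (\<lambda>w. X w + Y w)"
    using assms by (intro set_integral_le_ES) auto
  finally show ?thesis using assms(7,8) by simp
qed

lemma ES_add_ge_if_upper_event_tail:
  assumes [measurable]: "X \<in> borel_measurable M" "Y \<in> borel_measurable M"
    and "integrable M X" "integrable M Y" "continuously_distributed M X" "0 < p" "p < 1"
    and "upper_event M Y c (tail_set M p X)"
  shows "ES M p X + ES M p Y \<le> ES M p (\<lambda>w. X w + Y w)"
proof (rule ES_add_ge_if_common_upper_event[OF assms(1,2) _ assms(3,4) _ assms(6,7) _ assms(8)])
  show "prob (tail_set M p X) = 1 - p"
    using assms(5-7) by (intro prob_tail_set) auto
  show "upper_event M X (VaR M p X) (tail_set M p X)"
    unfolding upper_event_def by (rule AE_I2) (auto simp: tail_set_def)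
qed simp

section \<open>Weak comonotonicity and the comonotone coupling\<close>

lemma weakly_comonotonic_P_iff:
  assumes [measurable]: "X \<in> borel_measurable M" "Y \<in> borel_measurable M"
    and "continuously_distributed M X" "0 < p" "p < 1"
  shows "weakly_comonotonic_P M p X Y \<longleftrightarrow>
    (\<exists>c. upper_event M Y c (tail_set M p X))"
proof
  assume "weakly_comonotonic_P M p X Y"
  then obtain X0 Y0 where [measurable]: "X0 \<in> borel_measurable M" "Y0 \<in> borel_measurable M"
    and ae: "AE w in M. X0 w = X w" "AE w in M. Y0 w = Y w"
    and mono: "wcomono_pts (P_pairs M p X0) X0 Y0"
    unfolding weakly_comonotonic_P_def for_some_versions_def by blast
  let ?A = "tail_set M p X0"
  have VaR0: "VaR M p X0 = VaR M p X"
    using ae by (intro VaR_cong_AE) auto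
  have "continuously_distributed M X0"
    using assms(3) ae by (subst continuously_distributed_cong_distr[of X]) (auto intro!: distr_cong_AE)
  then have "prob ?A = 1 - p"
    using assms(4,5) by (intro prob_tail_set) auto
  then have "prob ?A \<noteq> 0" "prob (space M - ?A) \<noteq> 0"
    using assms(4,5) prob_compl[of ?A] by auto
  then have "?A \<noteq> {}" "space M - ?A \<noteq> {}"
    by (metis measure_empty)+
  have below: "Y0 w' \<le> Y0 w" if "w \<in> ?A" "w' \<in> space M - ?A" for w w'
  proof -
    have "0 \<le> (X0 w - X0 w') * (Y0 w - Y0 w')" "0 < X0 w - X0 w'"
      using mono that by (auto simp: wcomono_pts_def P_pairs_def tail_set_def)
    then show ?thesis by (simp add: zero_le_mult_iff)
  qed
  define c where "c = Inf (Y0 ` ?A)"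
  have lower: "c \<le> Y0 w" if "w \<in> ?A" for w
    unfolding c_def using that below \<open>space M - ?A \<noteq> {}\<close> by (auto intro!: cInf_lower bdd_belowI2)
  have upper: "Y0 w' \<le> c" if "w' \<in> space M - ?A" for w'
    unfolding c_def using that below \<open>?A \<noteq> {}\<close> by (auto intro!: cInf_greatest)
  have "upper_event M Y c (tail_set M p X)"
    unfolding upper_event_def using ae AE_space
  proof eventually_elim
    case (elim w)
    then show ?case using lower[of w] upper[of w] by (auto simp: tail_set_def VaR0)
  qed
  then show "\<exists>c. upper_event M Y c (tail_set M p X)" ..
next
  assume "\<exists>c. upper_event M Y c (tail_set M p X)"
  then obtain c where upper: "upper_event M Y c (tail_set M p X)" ..
  define Y0 where "Y0 w = (if w \<in> tail_set M p X then max c (Y w) else min c (Y w))" for w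
  have "AE w in M. Y0 w = Y w"
    using upper unfolding upper_event_def by eventually_elim (auto simp: Y0_def)
  moreover have "wcomono_pts (P_pairs M p X) X Y0"
    by (auto simp: wcomono_pts_def P_pairs_def tail_set_def Y0_def intro!: mult_nonneg_nonneg)
  moreover have "Y0 \<in> borel_measurable M"
    unfolding Y0_def by measurable
  ultimately show "weakly_comonotonic_P M p X Y"
    unfolding weakly_comonotonic_P_def for_some_versions_def using assms(1) by blast
qed

lemma weakly_antimonotonic_Q_on_full_set:
  assumes [measurable]: "X \<in> borel_measurable M" "Y \<in> borel_measurable M" and "weakly_antimonotonic_Q M p X Y"
  obtains G where "G \<in> events" "AE w in M. w \<in> G"
    "\<And>w w'. w \<in> G \<Longrightarrow> w' \<in> G \<Longrightarrow> w \<in> tail_set M p X \<Longrightarrow> w' \<in> tail_set M p X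
      \<Longrightarrow> (X w - X w') * (Y w - Y w') \<le> 0"
proof -
  obtain X1 Y1 where [measurable]: "X1 \<in> borel_measurable M" "Y1 \<in> borel_measurable M"
    and ae: "AE w in M. X1 w = X w" "AE w in M. Y1 w = Y w"
    and anti: "wantimono_pts (Q_pairs M p X1) X1 Y1"
    using assms(3) unfolding weakly_antimonotonic_Q_def for_some_versions_def by blast
  have VaR1: "VaR M p X1 = VaR M p X"
    using ae by (intro VaR_cong_AE) auto
  define G where "G = {w \<in> space M. X1 w = X w \<and> Y1 w = Y w}"
  show thesis
  proof
    show "G \<in> events"
      unfolding G_def by measurable
    show "AE w in M. w \<in> G"
      using ae AE_space by eventually_elim (auto simp: G_def)
    fix w w' assume w: "w \<in> G" "w' \<in> G" "w \<in> tail_set M p X" "w' \<in> tail_set M p X"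
    then have "(w, w') \<in> Q_pairs M p X1"
      by (auto simp: G_def Q_pairs_def tail_set_def VaR1)
    then have "(X1 w - X1 w') * (Y1 w - Y1 w') \<le> 0"
      using anti by (auto simp: wantimono_pts_def)
    then show "(X w - X w') * (Y w - Y w') \<le> 0"
      using w by (simp add: G_def)
  qed
qed

lemma distr_cdf_comp:
  assumes [measurable]: "X \<in> borel_measurable M" and "continuously_distributed M X"
  shows "distr M borel (\<lambda>w. cdf (distr M borel X) (X w)) = uniform01"
proof -
  interpret X: real_distribution "distr M borel X" by simp
  have "distr M borel (\<lambda>w. cdf (distr M borel X) (X w)) = distr (distr M borel X) borel (cdf (distr M borel X))"
    by (subst distr_distr) (auto simp: comp_def)
  also have "\<dots> = uniform01"
    using assms by (intro X.distr_cdf) (simp add: continuously_distributed_iff_distr)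
  finally show ?thesis .
qed

text \<open>The witness is the comonotone coupling \<open>Y' = F\<^sub>Y\<^sup>-\<^sup>1(F\<^sub>X(X))\<close>.\<close>

lemma comonotone_coupling:
  assumes [measurable]: "X \<in> borel_measurable M" "Y \<in> borel_measurable M"
    and "continuously_distributed M X" "0 < p" "p < 1"
  obtains Y' where "Y' \<in> borel_measurable M" "distr M borel Y' = distr M borel Y"
    "upper_event M Y' (VaR M p Y) (tail_set M p X)"
proof -
  interpret X: real_distribution "distr M borel X" by simp
  interpret Y: real_distribution "distr M borel Y" by simp
  define U where "U w = cdf (distr M borel X) (X w)" for w
  define Y' where "Y' w = quantile_transform (distr M borel Y) (U w)" for w
  have [measurable]: "U \<in> borel_measurable M" "Y' \<in> borel_measurable M"
    unfolding U_def Y'_def by measurable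
  have dU: "distr M borel U = uniform01"
    unfolding U_def using assms by (intro distr_cdf_comp) auto
  have "distr M borel Y' = distr (distr M borel U) borel (quantile_transform (distr M borel Y))"
    unfolding Y'_def by (subst distr_distr) (auto simp: comp_def)
  then have "distr M borel Y' = distr M borel Y"
    by (simp add: dU Y.distr_quantile_transform)
  moreover have "AE w in M. 0 < U w \<and> U w < 1"
    using AE_uniform01 by (subst (asm) dU[symmetric]) (simp add: AE_distr_iff)
  then have "upper_event M Y' (VaR M p Y) (tail_set M p X)"
    unfolding upper_event_def
  proof (rule AE_mp, intro AE_I2 impI)
    fix w assume w: "w \<in> space M" "0 < U w \<and> U w < 1"
    have cdf_VaR: "cdf (distr M borel X) (VaR M p X) = p"
      using assms X.cdf_quantile by (simp add: VaR_eq_quantile continuously_distributed_iff_distr)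
    show "(w \<in> tail_set M p X \<longrightarrow> VaR M p Y \<le> Y' w) \<and> (w \<notin> tail_set M p X \<longrightarrow> Y' w \<le> VaR M p Y)"
      using X.cdf_nondecreasing[of "VaR M p X" "X w"] X.cdf_nondecreasing[of "X w" "VaR M p X"]
        Y.quantile_mono[of p "U w"] Y.quantile_mono[of "U w" p] w assms(4,5)
      by (auto simp: tail_set_def Y'_def quantile_transform_def U_def cdf_VaR VaR_eq_quantile[of Y])
  qed
  ultimately show thesis using that \<open>Y' \<in> borel_measurable M\<close> by blast
qed

lemma upper_event_if_ES_add_ge:
  assumes [measurable]: "X \<in> borel_measurable M" "Y \<in> borel_measurable M"
    and "integrable M X" "integrable M Y" "continuously_distributed M X" "0 < p" "p < 1"
    and "ES M p X + ES M p Y \<le> ES M p (\<lambda>w. X w + Y w)"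
  shows "upper_event M Y (VaR M p Y) (tail_set M p X)"
proof -
  let ?a = "VaR M p X" and ?b = "VaR M p Y"
  define gap where "gap w = max (X w - ?a) 0 + max (Y w - ?b) 0 - max (X w + Y w - (?a + ?b)) 0" for w
  have int: "integrable M gap"
    unfolding gap_def using assms(3,4)
    by (intro Bochner_Integration.integrable_diff Bochner_Integration.integrable_add integrable_excess) auto
  have "integral\<^sup>L M gap = (\<integral>w. max (X w - ?a) 0 \<partial>M) + (\<integral>w. max (Y w - ?b) 0 \<partial>M)
      - (\<integral>w. max (X w + Y w - (?a + ?b)) 0 \<partial>M)"
    unfolding gap_def using assms(3,4)
    by (simp add: integrable_excess)
  moreover have "(1 - p) * (ES M p X + ES M p Y) \<le> (1 - p) * ES M p (\<lambda>w. X w + Y w)"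
    using assms(6-8) by simp
  ultimately have "integral\<^sup>L M gap \<le> 0"
    using assms ES_eq_VaR_plus_excess[of X p] ES_eq_VaR_plus_excess[of Y p]
      ES_le_plus_excess[of "\<lambda>w. X w + Y w" p "?a + ?b"]
    by (simp add: algebra_simps)
  moreover have nonneg: "0 \<le> gap w" for w
    unfolding gap_def by (auto simp: max_def)
  ultimately have "AE w in M. gap w = 0"
    using int by (subst integral_nonneg_eq_0_iff_AE[symmetric]) (auto intro!: antisym integral_nonneg)
  moreover have "AE w in M. w \<notin> {w \<in> space M. X w = ?a}"
    using assms(5) by (subst prob_eq_0[symmetric]) (auto simp: continuously_distributed_def)
  ultimately show ?thesis
    unfolding upper_event_def using AE_space
    by eventually_elim (auto simp: gap_def tail_set_def max_def split: if_splits)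
qed

lemma weakly_comonotonic_P_iff_ES_add_ge:
  assumes [measurable]: "X \<in> borel_measurable M" "Y \<in> borel_measurable M"
    and "integrable M X" "integrable M Y" "continuously_distributed M X" "0 < p" "p < 1"
  shows "weakly_comonotonic_P M p X Y \<longleftrightarrow> ES M p X + ES M p Y \<le> ES M p (\<lambda>w. X w + Y w)"
  using weakly_comonotonic_P_iff[OF assms(1,2,5-7)] ES_add_ge_if_upper_event_tail[OF assms]
    upper_event_if_ES_add_ge[OF assms] by blast

lemma ES_add_max_attained:
  assumes [measurable]: "X \<in> borel_measurable M" "Y \<in> borel_measurable M"
    and "integrable M X" "integrable M Y" "continuously_distributed M X" "0 < p" "p < 1"
  obtains Y' where "Y' \<in> borel_measurable M" "distr M borel Y' = distr M borel Y"
    "ES M p X + ES M p Y \<le> ES M p (\<lambda>w. X w + Y' w)"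
proof -
  obtain Y' where Y'[measurable]: "Y' \<in> borel_measurable M" and law: "distr M borel Y' = distr M borel Y"
    and upper: "upper_event M Y' (VaR M p Y) (tail_set M p X)"
    by (rule comonotone_coupling[OF assms(1,2,5-7)])
  have "integrable M Y'"
    using assms(4) integrable_cong_distr[OF assms(2) _ law] by simp
  then have "ES M p X + ES M p Y' \<le> ES M p (\<lambda>w. X w + Y' w)"
    using ES_add_ge_if_upper_event_tail[OF _ _ assms(3) _ assms(5-7) upper] by simp
  then show thesis
    using law by (intro that[OF Y' law]) (simp add: ES_cong_distr[of Y Y'])
qed

section \<open>Value-at-risk of sums\<close>

lemma VaR_add_le_if_tails:
  assumes [measurable]: "X \<in> borel_measurable M" "Y \<in> borel_measurable M"
    "X' \<in> borel_measurable M" "Y' \<in> borel_measurable M"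
    and "distr M borel X' = distr M borel X" "distr M borel Y' = distr M borel Y" "0 < p" "p < 1"
    and tails: "prob {w \<in> space M. x < X w} + prob {w \<in> space M. y < Y w} < 1 - p"
  shows "VaR M p (\<lambda>w. X' w + Y' w) \<le> x + y"
proof -
  have "prob {w \<in> space M. x < X' w} = prob {w \<in> space M. x < X w}"
    "prob {w \<in> space M. y < Y' w} = prob {w \<in> space M. y < Y w}"
    using prob_eq_measure_distr[of _ "{x<..}"] prob_eq_measure_distr[of _ "{y<..}"] assms(5,6) by simp_all
  moreover have "prob {w \<in> space M. x + y < X' w + Y' w}
      \<le> prob ({w \<in> space M. x < X' w} \<union> {w \<in> space M. y < Y' w})"
    by (intro finite_measure_mono) auto
  moreover have "prob ({w \<in> space M. x < X' w} \<union> {w \<in> space M. y < Y' w})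
      \<le> prob {w \<in> space M. x < X' w} + prob {w \<in> space M. y < Y' w}"
    by (intro measure_Un_le) auto
  ultimately have "prob {w \<in> space M. x + y < X' w + Y' w} < 1 - p"
    using tails by linarith
  moreover have "{w \<in> space M. X' w + Y' w \<le> x + y} = space M - {w \<in> space M. x + y < X' w + Y' w}"
    by auto
  ultimately have "p < cdf (distr M borel (\<lambda>w. X' w + Y' w)) (x + y)"
    by (simp add: cdf_distr prob_compl)
  then show ?thesis
    using assms(7) by (simp add: VaR_eq_quantile real_distribution.quantile_le)
qed

text \<open>The three events are disjoint pieces of the tail event of \<open>X\<close>: the separation at \<open>c\<close>
  puts \<open>{Y > Y w\<^sub>1}\<close> inside the tail, and antimonotonicity there puts it below \<open>X w\<^sub>1\<close>.\<close>

lemma tail_pieces_le: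
  assumes [measurable]: "X \<in> borel_measurable M" "Y \<in> borel_measurable M" "G \<in> events"
    and "continuously_distributed M X" "0 < p" "p < 1" "AE w in M. w \<in> G"
    and sep: "\<And>w. w \<in> G \<Longrightarrow> (w \<in> tail_set M p X \<longrightarrow> c \<le> Y w) \<and> (w \<notin> tail_set M p X \<longrightarrow> Y w \<le> c)"
    and anti: "\<And>w w'. w \<in> G \<Longrightarrow> w' \<in> G \<Longrightarrow> w \<in> tail_set M p X \<Longrightarrow> w' \<in> tail_set M p X
      \<Longrightarrow> (X w - X w') * (Y w - Y w') \<le> 0"
    and w1: "w1 \<in> G" "w1 \<in> tail_set M p X" "X w1 < x"
  shows "prob {w \<in> space M. x < X w} + prob {w \<in> space M. Y w1 < Y w}
    + prob {w \<in> space M. X w1 < X w \<and> X w \<le> x} \<le> 1 - p"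
proof -
  have full: "prob (G \<inter> S) = prob S" if [measurable]: "S \<in> events" for S
    using assms(7) by (intro finite_measure_eq_AE) auto
  define T1 where "T1 = G \<inter> {w \<in> space M. x < X w}"
  define T2 where "T2 = G \<inter> {w \<in> space M. Y w1 < Y w}"
  define T3 where "T3 = G \<inter> {w \<in> space M. X w1 < X w \<and> X w \<le> x}"
  have [measurable]: "T1 \<in> events" "T2 \<in> events" "T3 \<in> events"
    unfolding T1_def T2_def T3_def by measurable
  have T2: "w \<in> tail_set M p X \<and> X w \<le> X w1" if "w \<in> T2" for w
  proof -
    have w: "w \<in> G" "Y w1 < Y w" using that by (auto simp: T2_def)
    then have "w \<in> tail_set M p X"
      using sep[of w] sep[of w1] w1 by force
    moreover have "(X w - X w1) * (Y w - Y w1) \<le> 0"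
      using anti[OF w(1) w1(1) _ w1(2)] calculation .
    ultimately show ?thesis
      using w(2) by (simp add: mult_le_0_iff)
  qed
  have "T1 \<union> T2 \<union> T3 \<subseteq> tail_set M p X"
    using T2 w1 by (auto simp: T1_def T3_def tail_set_def)
  moreover have "T1 \<inter> T2 = {}" "(T1 \<union> T2) \<inter> T3 = {}"
    using T2 w1(3) by (fastforce simp: T1_def T3_def)+
  ultimately have "prob T1 + prob T2 + prob T3 \<le> prob (tail_set M p X)"
    using finite_measure_Union[of T1 T2] finite_measure_Union[of "T1 \<union> T2" T3]
      finite_measure_mono[of "T1 \<union> T2 \<union> T3" "tail_set M p X"] by simp
  then show ?thesis
    using assms(4-6) full by (simp add: T1_def T2_def T3_def prob_tail_set)
qed

lemma exists_bin_pos_prob: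
  fixes Y :: "'a \<Rightarrow> real"
  assumes [measurable]: "Y \<in> borel_measurable M" "E \<in> events" and "0 < prob E" "0 < \<epsilon>"
  shows "\<exists>k::int. 0 < prob (E \<inter> {w \<in> space M. of_int k * \<epsilon> \<le> Y w \<and> Y w < (of_int k + 1) * \<epsilon>})"
proof (rule ccontr)
  define bin where "bin k = E \<inter> {w \<in> space M. of_int k * \<epsilon> \<le> Y w \<and> Y w < (of_int k + 1) * \<epsilon>}" for k :: int
  have [measurable]: "bin k \<in> events" for k
    unfolding bin_def by measurable
  assume "\<not> (\<exists>k::int. 0 < prob (bin k))"
  then have "prob (bin k) = 0" for k
    using measure_nonneg[of M "bin k"] by (meson not_less order.antisym)
  then have "bin k \<in> null_sets M" for k
    by (simp add: prob_eq_0 AE_iff_null_sets)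
  then have "(\<Union>k. bin k) \<in> null_sets M"
    by (intro null_sets_UN') auto
  moreover have "E \<subseteq> (\<Union>k. bin k)"
  proof
    fix w assume "w \<in> E"
    have "of_int \<lfloor>Y w / \<epsilon>\<rfloor> \<le> Y w / \<epsilon>" "Y w / \<epsilon> < of_int \<lfloor>Y w / \<epsilon>\<rfloor> + 1"
      by linarith+
    then have "of_int \<lfloor>Y w / \<epsilon>\<rfloor> * \<epsilon> \<le> Y w" "Y w < (of_int \<lfloor>Y w / \<epsilon>\<rfloor> + 1) * \<epsilon>"
      using assms(4) by (simp_all only: pos_le_divide_eq[symmetric] pos_divide_less_eq[symmetric])
    then show "w \<in> (\<Union>k. bin k)"
      using \<open>w \<in> E\<close> sets.sets_into_space[OF assms(2)] by (auto simp: bin_def)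
  qed
  ultimately have "E \<in> null_sets M"
    using null_sets_subset assms(2) by blast
  then show False
    using assms(3) by (simp add: measure_def null_setsD1)
qed

lemma exists_cdf_less_pair:
  assumes [measurable]: "X \<in> borel_measurable M" "E \<in> events"
    and "continuously_distributed M X" "0 < prob E"
  shows "\<exists>w1\<in>E. \<exists>w2\<in>E. cdf (distr M borel X) (X w1) < cdf (distr M borel X) (X w2)"
proof (rule ccontr)
  let ?U = "\<lambda>w. cdf (distr M borel X) (X w)"
  interpret X: real_distribution "distr M borel X" by simp
  have [measurable]: "?U \<in> borel_measurable M" by measurable
  obtain w0 where w0: "w0 \<in> E" using assms(4) by force
  assume "\<not> (\<exists>w1\<in>E. \<exists>w2\<in>E. ?U w1 < ?U w2)"
  then have "E \<subseteq> {w \<in> space M. ?U w \<in> {?U w0}}"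
    using w0 sets.sets_into_space[OF assms(2)] by (force intro: antisym)
  then have "prob E \<le> measure uniform01 {?U w0}"
    using prob_eq_measure_distr[of ?U "{?U w0}"] distr_cdf_comp[OF assms(1,3)]
      finite_measure_mono[of E "{w \<in> space M. ?U w \<in> {?U w0}}"] by simp
  then show False
    using assms(4) measure_uniform01_singleton by simp
qed

lemma exists_pair_with_mass_between:
  fixes X Y :: "'a \<Rightarrow> real"
  assumes [measurable]: "X \<in> borel_measurable M" "Y \<in> borel_measurable M" "E \<in> events"
    and "continuously_distributed M X" "0 < prob E" "0 < \<epsilon>"
  shows "\<exists>w1\<in>E. \<exists>w2\<in>E. X w1 < X w2 \<and> 0 < prob {w \<in> space M. X w1 < X w \<and> X w \<le> X w2}
    \<and> Y w1 < Y w2 + \<epsilon>"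
proof -
  interpret X: real_distribution "distr M borel X" by simp
  obtain k :: int where pos: "0 < prob (E \<inter> {w \<in> space M. of_int k * \<epsilon> \<le> Y w \<and> Y w < (of_int k + 1) * \<epsilon>})"
    using exists_bin_pos_prob[OF assms(2,3,5,6)] by blast
  have "E \<inter> {w \<in> space M. of_int k * \<epsilon> \<le> Y w \<and> Y w < (of_int k + 1) * \<epsilon>} \<in> events"
    by measurable
  from exists_cdf_less_pair[OF assms(1) this assms(4) pos]
  obtain w1 w2 where w: "w1 \<in> E" "w2 \<in> E" "Y w1 < (of_int k + 1) * \<epsilon>" "of_int k * \<epsilon> \<le> Y w2"
    and less: "cdf (distr M borel X) (X w1) < cdf (distr M borel X) (X w2)"
    by blast
  then have "X w1 < X w2"
    using X.cdf_nondecreasing[of "X w2" "X w1"] by (meson not_less)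
  moreover have "prob {w \<in> space M. X w1 < X w \<and> X w \<le> X w2}
      = cdf (distr M borel X) (X w2) - cdf (distr M borel X) (X w1)"
    using prob_eq_measure_distr[of X "{X w1<..X w2}"] X.cdf_diff_eq[OF \<open>X w1 < X w2\<close>] by simp
  ultimately show ?thesis
    using w less by (intro bexI[OF _ w(1)] bexI[OF _ w(2)]) (auto simp: algebra_simps)
qed

lemma weakly_monotonic_on_full_set:
  assumes [measurable]: "X \<in> borel_measurable M" "Y \<in> borel_measurable M"
    and "continuously_distributed M X" "0 < p" "p < 1"
    and "weakly_comonotonic_P M p X Y" "weakly_antimonotonic_Q M p X Y"
  obtains G c where "G \<in> events" "AE w in M. w \<in> G"
    "\<And>w. w \<in> G \<Longrightarrow> (w \<in> tail_set M p X \<longrightarrow> c \<le> Y w) \<and> (w \<notin> tail_set M p X \<longrightarrow> Y w \<le> c)"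
    "\<And>w w'. w \<in> G \<Longrightarrow> w' \<in> G \<Longrightarrow> w \<in> tail_set M p X \<Longrightarrow> w' \<in> tail_set M p X
      \<Longrightarrow> (X w - X w') * (Y w - Y w') \<le> 0"
proof -
  obtain c where upper: "upper_event M Y c (tail_set M p X)"
    using weakly_comonotonic_P_iff[OF assms(1-5)] assms(6) by blast
  obtain G0 where [measurable]: "G0 \<in> events" and "AE w in M. w \<in> G0" and anti:
    "\<And>w w'. w \<in> G0 \<Longrightarrow> w' \<in> G0 \<Longrightarrow> w \<in> tail_set M p X \<Longrightarrow> w' \<in> tail_set M p X
      \<Longrightarrow> (X w - X w') * (Y w - Y w') \<le> 0"
    using weakly_antimonotonic_Q_on_full_set[OF assms(1,2,7)] by blast
  let ?G = "G0 \<inter> {w \<in> space M. (w \<in> tail_set M p X \<longrightarrow> c \<le> Y w) \<and> (w \<notin> tail_set M p X \<longrightarrow> Y w \<le> c)}"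
  show thesis
  proof (rule that[of ?G c])
    show "AE w in M. w \<in> ?G"
      using upper \<open>AE w in M. w \<in> G0\<close> AE_space unfolding upper_event_def by eventually_elim auto
  qed (use anti in auto)
qed

lemma VaR_add_le_if_weakly_monotonic:
  assumes [measurable]: "X \<in> borel_measurable M" "Y \<in> borel_measurable M"
    "X' \<in> borel_measurable M" "Y' \<in> borel_measurable M"
    and "continuously_distributed M X" "0 < p" "p < 1"
    and "weakly_comonotonic_P M p X Y" "weakly_antimonotonic_Q M p X Y"
    and "distr M borel X' = distr M borel X" "distr M borel Y' = distr M borel Y"
  shows "VaR M p (\<lambda>w. X' w + Y' w) \<le> VaR M p (\<lambda>w. X w + Y w)"
proof (rule field_le_epsilon)
  fix e :: real assume "0 < e"
  let ?A = "tail_set M p X" and ?s = "VaR M p (\<lambda>w. X w + Y w)"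
  obtain G c where G[measurable]: "G \<in> events" and "AE w in M. w \<in> G"
    and sep: "\<And>w. w \<in> G \<Longrightarrow> (w \<in> ?A \<longrightarrow> c \<le> Y w) \<and> (w \<notin> ?A \<longrightarrow> Y w \<le> c)"
    and anti: "\<And>w w'. w \<in> G \<Longrightarrow> w' \<in> G \<Longrightarrow> w \<in> ?A \<Longrightarrow> w' \<in> ?A \<Longrightarrow> (X w - X w') * (Y w - Y w') \<le> 0"
    using weakly_monotonic_on_full_set[OF assms(1,2,5-9)] by blast
  define B where "B = {w \<in> space M. X w + Y w \<le> ?s + e / 2}"
  have [measurable]: "B \<in> events"
    unfolding B_def by measurable
  interpret S: real_distribution "distr M borel (\<lambda>w. X w + Y w)" by simp
  have "p < prob B"
    using S.less_cdf_if_quantile_less[of p "?s + e / 2"] assms(6,7) \<open>0 < e\<close>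
    by (simp add: B_def VaR_eq_quantile cdf_distr)
  moreover have "prob ?A = 1 - p"
    using assms(1,5-7) prob_tail_set by auto
  ultimately have "0 < prob (?A \<inter> B)"
    using measure_Un3[of ?A M B] prob_le_1[of "?A \<union> B"] by (simp add: fmeasurable_def less_top[symmetric])
  also have "prob (?A \<inter> B) = prob (G \<inter> ?A \<inter> B)"
    using \<open>AE w in M. w \<in> G\<close> by (intro finite_measure_eq_AE) auto
  finally obtain w1 w2 where w: "w1 \<in> G \<inter> ?A \<inter> B" "w2 \<in> G \<inter> ?A \<inter> B" "X w1 < X w2"
    "0 < prob {w \<in> space M. X w1 < X w \<and> X w \<le> X w2}" "Y w1 < Y w2 + e / 2"
    using exists_pair_with_mass_between[of X Y "G \<inter> ?A \<inter> B" "e / 2"] assms(1,2,5) \<open>0 < e\<close>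
    by auto
  have "prob {w \<in> space M. X w2 < X w} + prob {w \<in> space M. Y w1 < Y w} < 1 - p"
    using tail_pieces_le[OF assms(1,2) G assms(5-7) \<open>AE w in M. w \<in> G\<close> sep anti, of w1 "X w2"] w
    by fastforce
  then have "VaR M p (\<lambda>w. X' w + Y' w) \<le> X w2 + Y w1"
    using assms by (intro VaR_add_le_if_tails) auto
  also have "\<dots> \<le> ?s + e"
    using w by (simp add: B_def)
  finally show "VaR M p (\<lambda>w. X' w + Y' w) \<le> ?s + e" .
qed

end

theorem theorem3p1:
  fixes M :: "'a measure" and X Y :: "'a \<Rightarrow> real" and p :: real
  assumes "prob_space M" and "atomless M"
    and "X \<in> borel_measurable M" and "Y \<in> borel_measurable M"
    and "integrable M X" and "integrable M Y"
    and "continuously_distributed M X" and "continuously_distributed M Y"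
    and "0 < p" and "p < 1"
  shows "(weakly_comonotonic_P M p X Y \<and> weakly_antimonotonic_Q M p X Y \<longrightarrow>
           (\<forall>X' Y'. X' \<in> borel_measurable M \<and> Y' \<in> borel_measurable M \<and>
              distr M borel X' = distr M borel X \<and> distr M borel Y' = distr M borel Y \<longrightarrow>
              VaR M p (\<lambda>w. X' w + Y' w) \<le> VaR M p (\<lambda>w. X w + Y w)))
       \<and> (weakly_comonotonic_P M p X Y \<longleftrightarrow>
           (\<forall>X' Y'. X' \<in> borel_measurable M \<and> Y' \<in> borel_measurable M \<and>
              distr M borel X' = distr M borel X \<and> distr M borel Y' = distr M borel Y \<longrightarrow>
              ES M p (\<lambda>w. X' w + Y' w) \<le> ES M p (\<lambda>w. X w + Y w)))"
proof -
  interpret prob_space M by fact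
  note [measurable] = assms(3,4) and int = assms(5,6) and cont = assms(7) and p = assms(9,10)
  note ES_iff = weakly_comonotonic_P_iff_ES_add_ge[OF assms(3,4) int cont p]
  show ?thesis
  proof (intro conjI impI allI iffI)
    fix X' Y'
    assume "weakly_comonotonic_P M p X Y \<and> weakly_antimonotonic_Q M p X Y"
      and "X' \<in> borel_measurable M \<and> Y' \<in> borel_measurable M \<and>
        distr M borel X' = distr M borel X \<and> distr M borel Y' = distr M borel Y"
    then show "VaR M p (\<lambda>w. X' w + Y' w) \<le> VaR M p (\<lambda>w. X w + Y w)"
      by (intro VaR_add_le_if_weakly_monotonic[OF assms(3,4) _ _ cont p]) blast+
  next
    fix X' Y'
    assume "weakly_comonotonic_P M p X Y"
      and "X' \<in> borel_measurable M \<and> Y' \<in> borel_measurable M \<and>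
        distr M borel X' = distr M borel X \<and> distr M borel Y' = distr M borel Y"
    then show "ES M p (\<lambda>w. X' w + Y' w) \<le> ES M p (\<lambda>w. X w + Y w)"
      using ES_add_le_if_same_marginals[OF assms(3,4) _ _ int p, of X' Y'] ES_iff by auto
  next
    assume ES_le: "\<forall>X' Y'. X' \<in> borel_measurable M \<and> Y' \<in> borel_measurable M \<and>
        distr M borel X' = distr M borel X \<and> distr M borel Y' = distr M borel Y \<longrightarrow>
        ES M p (\<lambda>w. X' w + Y' w) \<le> ES M p (\<lambda>w. X w + Y w)"
    obtain Y' where "Y' \<in> borel_measurable M" "distr M borel Y' = distr M borel Y"
      and "ES M p X + ES M p Y \<le> ES M p (\<lambda>w. X w + Y' w)"
      by (rule ES_add_max_attained[OF assms(3,4) int cont p])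
    moreover have "ES M p (\<lambda>w. X w + Y' w) \<le> ES M p (\<lambda>w. X w + Y w)"
      using ES_le calculation(1,2) assms(3) by blast
    ultimately show "weakly_comonotonic_P M p X Y"
      unfolding ES_iff by linarith
  qed
qed

end
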